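(* Let $\Delta$ be a finite abstract simplicial complex of dimension $d\ge0$ and $\Delta^{(k)}$ its $k$-fold iterated barycentric subdivision. For each $0\le i\le d$ there are rational numbers $C_{j,i}$ ($0\le j\le d-i$), independent of $k$, such that for all $k\ge0$ $$f^{\Delta^{(k)}}_i=\sum_{j=0}^{d-i}C_{j,i}\,(d+1-j)!^k,$$ and $C_{0,i}=f^\Delta_dF_{i,d}$. Consequently $f^{\Delta^{(k)}}_i=f^\Delta_dF_{i,d}(d+1)!^k+O(d!^k)$ as $k\to\infty$.
   Context: An abstract simplicial complex $\Delta$ on a finite set is a family of subsets closed under taking subsets (the empty set included); a $d$-simplex is a member of cardinality $d+1$, and $\dim\Delta$ is the largest such $d$. $f^\Delta_i$ denotes the number of $i$-simplices. The barycentric subdivision $\Delta'$ is the complex consisting of $\emptyset$ together with all sets $\{\sigma_0,\dots,\sigma_n\}$ ($n\ge0$) of nonempty simplices of $\Delta$ with $\sigma_0\subsetneq\cdots\subsetneq\sigma_n$; $\Delta^{(0)}=\Delta$, $\Delta^{(k+1)}=(\Delta^{(k)})'$. For integers $i,d\ge -1$ define $f_{-1,-1}=1$, $f_{-1,d}=0$ for $d\ge0$, $f_{i,-1}=0$ for $i\ge0$, and $f_{i,d}=(i+1)!\,S(d+1,i+1)$ for $i,d\ge0$ ($S$ = Stirling numbers of the second kind). For $d\ge0$ define $F_{d,d}=1$ and recursively for $-1\le i\le d-1$, $F_{i,d}=\frac{1}{(d+1)!-(i+1)!}\sum_{j=i+1}^{d}f_{i,j}F_{j,d}$. *)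

theory Defs
  imports Complex_Main "HOL-Library.FSet" "HOL-Library.Landau_Symbols" "HOL-Combinatorics.Stirling"
begin

definition simplicial_complex :: "'a set set \<Rightarrow> bool" where
  "simplicial_complex K \<longleftrightarrow> {} \<in> K \<and> (\<forall>\<sigma>\<in>K. \<forall>\<tau>. \<tau> \<subseteq> \<sigma> \<longrightarrow> \<tau> \<in> K)"

definition fnum :: "'a set set \<Rightarrow> nat \<Rightarrow> nat" where
  "fnum K i = card {\<sigma>\<in>K. card \<sigma> = i + 1}"

definition has_dim :: "'a set set \<Rightarrow> nat \<Rightarrow> bool" where
  "has_dim K d \<longleftrightarrow> (\<exists>\<sigma>\<in>K. card \<sigma> = d + 1) \<and> (\<forall>\<sigma>\<in>K. finite \<sigma> \<and> card \<sigma> \<le> d + 1)"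

definition bsd :: "'a set set \<Rightarrow> 'a set set set" where
  "bsd K = insert {} {c. c \<noteq> {} \<and> finite c \<and> c \<subseteq> K - {{}} \<and>
                         (\<forall>\<sigma>\<in>c. \<forall>\<tau>\<in>c. \<sigma> \<subseteq> \<tau> \<or> \<tau> \<subseteq> \<sigma>)}"

text \<open>Since the vertex type changes with each subdivision, iterated subdivisions are
  taken in a universal vertex type: a vertex is either an original vertex or (a label of)
  a finite set of vertices. Relabelling via the injective map vert does not change f-vectors.\<close>
datatype 'a vx = V 'a | S "'a vx fset"

definition vert :: "'a vx set \<Rightarrow> 'a vx" where
  "vert \<sigma> = S (Abs_fset \<sigma>)"

fun bsd_iter :: "nat \<Rightarrow> 'a set set \<Rightarrow> 'a vx set set" where
  "bsd_iter 0 K = (\<lambda>\<sigma>. V ` \<sigma>) ` K"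
| "bsd_iter (Suc k) K = (\<lambda>c. vert ` c) ` bsd (bsd_iter k K)"

definition fsmall :: "int \<Rightarrow> int \<Rightarrow> rat" where
  "fsmall i d = (if i = -1 \<and> d = -1 then 1
                 else if i = -1 \<or> d = -1 then 0
                 else fact (nat i + 1) * of_nat (Stirling (nat d + 1) (nat i + 1)))"

function Fbig :: "int \<Rightarrow> int \<Rightarrow> rat" where
  "Fbig i d = (if d < 0 \<or> i < -1 \<or> i > d then 0
               else if i = d then 1
               else (1 / (fact (nat (d + 1)) - fact (nat (i + 1)))) *
                    (\<Sum>j\<in>{i+1..d}. fsmall i j * Fbig j d))"
  by pat_completeness auto
termination
  by (relation "measure (\<lambda>(i, d). nat (d - i))") auto

end

theory Submission
  imports Defs "HOL-Library.FuncSet"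
begin

text \<open>
  An $i$-face of the barycentric subdivision is a chain of $i+1$ nonempty faces of $\Delta$.
  The chains whose largest element is a fixed face $\tau$ are in bijection with the surjections
  $\tau \to \{0,\dots,i\}$: a surjection gives the chain of its sublevel sets, and a chain is
  recovered from the function counting, for each vertex, the chain members avoiding it. Hence
  $f_i(\Delta') = \sum_j f_{i,j} f_j(\Delta)$, an upper triangular linear map whose diagonal
  entries $(i+1)!$ are pairwise distinct. Solving $f(\Delta^{(k+1)}) = M f(\Delta^{(k)})$ row by
  row from $i = d$ downwards, row $i$ is a first order recurrence with eigenvalue $(i+1)!$ driven
  by the geometric terms $(j+1)!^k$, $j > i$, of the rows below, so it is a combination of
  $(i+1)!^k, \dots, (d+1)!^k$; the coefficient of $(d+1)!^k$ obeys exactly the recursion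
  defining $F_{i,d}$, and all other terms are $O(d!^k)$.
\<close>

section \<open>Counting surjections\<close>

definition surjections :: "'a set \<Rightarrow> 'b set \<Rightarrow> ('a \<Rightarrow> 'b) set" where
  "surjections A B = {f \<in> A \<rightarrow>\<^sub>E B. f ` A = B}"

lemma finite_surjections: "finite A \<Longrightarrow> finite B \<Longrightarrow> finite (surjections A B)"
  unfolding surjections_def by (rule finite_subset[of _ "A \<rightarrow>\<^sub>E B"]) (auto intro: finite_PiE)

lemma surjections_insert:
  assumes "x \<notin> A"
  shows "surjections (insert x A) B = (\<lambda>(y, g). g(x := y)) `
           (SIGMA y:B. surjections A B \<union> surjections A (B - {y}))"
proof -
  have image_upd: "(g(x := y)) ` A = g ` A" for g :: "'a \<Rightarrow> 'b" and y
    using assms by (auto intro!: image_cong)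
  have extend_iff: "g \<in> surjections A B \<union> surjections A (B - {y}) \<longleftrightarrow>
        g \<in> A \<rightarrow>\<^sub>E B \<and> insert y (g ` A) = B" if "y \<in> B" for g y
    using that by (auto simp: surjections_def PiE_iff)
  have "surjections (insert x A) B
        = {f \<in> (\<lambda>(y, g). g(x := y)) ` (B \<times> (A \<rightarrow>\<^sub>E B)). f ` insert x A = B}"
    unfolding surjections_def PiE_insert_eq ..
  also have "\<dots> = (\<lambda>(y, g). g(x := y)) ` {(y, g) \<in> B \<times> (A \<rightarrow>\<^sub>E B). insert y (g ` A) = B}"
    using image_upd by fastforce
  also have "{(y, g) \<in> B \<times> (A \<rightarrow>\<^sub>E B). insert y (g ` A) = B}
        = (SIGMA y:B. surjections A B \<union> surjections A (B - {y}))"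
    using extend_iff by blast
  finally show ?thesis .
qed

lemma card_surjections:
  assumes "finite A" "finite B"
  shows "card (surjections A B) = fact (card B) * Stirling (card A) (card B)"
  using assms
proof (induction A arbitrary: B rule: finite_induct)
  case empty
  then show ?case
    by (cases "card B") (auto simp: surjections_def)
next
  case (insert x A)
  let ?T = "\<lambda>y. surjections A B \<union> surjections A (B - {y})"
  have card_T: "card (?T y) = fact (card B) * Stirling (card A) (card B)
      + fact (card B - 1) * Stirling (card A) (card B - 1)" if "y \<in> B" for y
  proof -
    have "surjections A B \<inter> surjections A (B - {y}) = {}"
      using that by (auto simp: surjections_def)
    then have "card (?T y) = card (surjections A B) + card (surjections A (B - {y}))"
      by (intro card_Un_disjoint finite_surjections) (use insert in auto)
    then show ?thesis
      using insert that by (simp add: card_Diff_singleton)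
  qed
  have "inj_on (\<lambda>(y, g). g(x := y)) (Sigma B ?T)"
    by (rule inj_on_subset[OF inj_combinator[OF insert(2), of "\<lambda>_. B"]])
       (auto simp: surjections_def)
  then have "card (surjections (insert x A) B) = card (Sigma B ?T)"
    unfolding surjections_insert[OF insert(2)] by (rule card_image)
  also have "\<dots> = card B * (fact (card B) * Stirling (card A) (card B)
      + fact (card B - 1) * Stirling (card A) (card B - 1))"
    using insert card_T by (subst card_SigmaI) (auto intro: finite_surjections)
  also have "\<dots> = fact (card B) * Stirling (card (insert x A)) (card B)"
    using insert by (cases "card B") (simp_all add: algebra_simps)
  finally show ?case .
qed

section \<open>Chains of subsets with a given top element\<close>

definition top_chains :: "'a set \<Rightarrow> nat \<Rightarrow> 'a set set set" where
  "top_chains \<tau> m = {c \<in> chains (Pow \<tau> - {{}}). \<tau> \<in> c \<and> card c = Suc m}"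

definition sublevel :: "'a set \<Rightarrow> ('a \<Rightarrow> nat) \<Rightarrow> nat \<Rightarrow> 'a set" where
  "sublevel \<tau> f l = {x \<in> \<tau>. f x \<le> l}"

lemma sublevel_mono: "l \<le> l' \<Longrightarrow> sublevel \<tau> f l \<subseteq> sublevel \<tau> f l'"
  unfolding sublevel_def by auto

lemma inj_on_sublevel:
  assumes "f \<in> surjections \<tau> {..m}"
  shows "inj_on (sublevel \<tau> f) {..m}"
proof (rule linorder_inj_onI')
  fix l l' assume "l \<in> {..m}" "l' \<in> {..m}" "l < l'"
  moreover have "l' \<in> f ` \<tau>"
    using assms \<open>l' \<in> {..m}\<close> unfolding surjections_def by simp
  then obtain x where "x \<in> \<tau>" "f x = l'" by blast
  ultimately have "x \<in> sublevel \<tau> f l'" "x \<notin> sublevel \<tau> f l"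
    unfolding sublevel_def by auto
  then show "sublevel \<tau> f l \<noteq> sublevel \<tau> f l'" by blast
qed

lemma sublevel_chain_in_top_chains:
  assumes f: "f \<in> surjections \<tau> {..m}"
  shows "sublevel \<tau> f ` {..m} \<in> top_chains \<tau> m"
proof -
  have "sublevel \<tau> f l \<noteq> {}" if "l \<le> m" for l
  proof -
    have "l \<in> f ` \<tau>"
      using f that unfolding surjections_def by simp
    then obtain x where "x \<in> \<tau>" "f x = l" by blast
    then show ?thesis unfolding sublevel_def by auto
  qed
  then have "sublevel \<tau> f ` {..m} \<subseteq> Pow \<tau> - {{}}"
    unfolding sublevel_def by auto
  moreover have "chain\<^sub>\<subseteq> (sublevel \<tau> f ` {..m})"
    unfolding chain_subset_def
  proof (intro ballI)
    fix \<sigma> \<rho> assume "\<sigma> \<in> sublevel \<tau> f ` {..m}" "\<rho> \<in> sublevel \<tau> f ` {..m}"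
    then obtain l l' where "\<sigma> = sublevel \<tau> f l" "\<rho> = sublevel \<tau> f l'" by blast
    then show "\<sigma> \<subseteq> \<rho> \<or> \<rho> \<subseteq> \<sigma>"
      using sublevel_mono[of l l' \<tau> f] sublevel_mono[of l' l \<tau> f] nat_le_linear[of l l'] by blast
  qed
  moreover have "\<tau> \<in> sublevel \<tau> f ` {..m}"
  proof (rule rev_image_eqI)
    show "\<tau> = sublevel \<tau> f m"
      using f unfolding surjections_def sublevel_def by auto
  qed simp
  moreover have "card (sublevel \<tau> f ` {..m}) = Suc m"
    using card_image[OF inj_on_sublevel[OF f]] by simp
  ultimately show ?thesis
    unfolding top_chains_def chains_def by blast
qed

lemma card_sublevels_avoiding:
  assumes f: "f \<in> surjections \<tau> {..m}" and x: "x \<in> \<tau>"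
  shows "card {\<sigma> \<in> sublevel \<tau> f ` {..m}. x \<notin> \<sigma>} = f x"
proof -
  have "f x \<le> m" using f x unfolding surjections_def by auto
  then have "{\<sigma> \<in> sublevel \<tau> f ` {..m}. x \<notin> \<sigma>} = sublevel \<tau> f ` {..<f x}"
    using x unfolding sublevel_def by auto
  moreover have "inj_on (sublevel \<tau> f) {..<f x}"
    by (rule inj_on_subset[OF inj_on_sublevel[OF f]]) (use \<open>f x \<le> m\<close> in auto)
  ultimately show ?thesis by (simp add: card_image)
qed

lemma inj_on_sublevel_chain: "inj_on (\<lambda>f. sublevel \<tau> f ` {..m}) (surjections \<tau> {..m})"
proof (rule inj_onI)
  fix f g assume f: "f \<in> surjections \<tau> {..m}" and g: "g \<in> surjections \<tau> {..m}"
    and eq: "sublevel \<tau> f ` {..m} = sublevel \<tau> g ` {..m}"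
  show "f = g"
  proof (rule extensionalityI[of _ \<tau>])
    show "f \<in> extensional \<tau>" "g \<in> extensional \<tau>"
      using f g unfolding surjections_def by (auto simp: PiE_def)
    show "f x = g x" if "x \<in> \<tau>" for x
      using card_sublevels_avoiding[OF f that] card_sublevels_avoiding[OF g that] eq by simp
  qed
qed

lemma surjections_if_inj_on_sublevel:
  assumes g: "g \<in> \<tau> \<rightarrow>\<^sub>E {..m}" and inj: "inj_on (sublevel \<tau> g) {..m}"
    and "sublevel \<tau> g 0 \<noteq> {}"
  shows "g \<in> surjections \<tau> {..m}"
proof -
  have "l \<in> g ` \<tau>" if "l \<le> m" for l
  proof (cases l)
    case 0
    then show ?thesis
      using \<open>sublevel \<tau> g 0 \<noteq> {}\<close> unfolding sublevel_def by auto
  next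
    case (Suc l')
    then have "sublevel \<tau> g l' \<noteq> sublevel \<tau> g l"
      using inj_onD[OF inj, of l' l] that by auto
    moreover have "sublevel \<tau> g l' \<subseteq> sublevel \<tau> g l"
      using Suc by (simp add: sublevel_mono)
    ultimately obtain x where "x \<in> sublevel \<tau> g l" "x \<notin> sublevel \<tau> g l'" by blast
    then have "x \<in> \<tau>" "g x = l"
      using Suc unfolding sublevel_def by auto
    then show ?thesis by (metis imageI)
  qed
  then show ?thesis
    using g unfolding surjections_def by auto
qed

lemma top_chain_member_eq_sublevel:
  assumes c: "c \<in> top_chains \<tau> m" and \<sigma>: "\<sigma> \<in> c"
  shows "sublevel \<tau> (\<lambda>x. card {\<rho> \<in> c. x \<notin> \<rho>}) (card {\<rho> \<in> c. \<rho> \<subset> \<sigma>}) = \<sigma>"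
proof -
  from c have fin: "finite c" and sub: "c \<subseteq> Pow \<tau>" and ch: "chain\<^sub>\<subseteq> c"
    unfolding top_chains_def chains_def by (auto intro: card_ge_0_finite)
  have "card {\<rho> \<in> c. x \<notin> \<rho>} \<le> card {\<rho> \<in> c. \<rho> \<subset> \<sigma>} \<longleftrightarrow> x \<in> \<sigma>" if "x \<in> \<tau>" for x
  proof
    assume "x \<in> \<sigma>"
    then have "{\<rho> \<in> c. x \<notin> \<rho>} \<subseteq> {\<rho> \<in> c. \<rho> \<subset> \<sigma>}"
      using ch \<sigma> unfolding chain_subset_def by blast
    then show "card {\<rho> \<in> c. x \<notin> \<rho>} \<le> card {\<rho> \<in> c. \<rho> \<subset> \<sigma>}"
      using fin by (intro card_mono) auto
  next
    assume le: "card {\<rho> \<in> c. x \<notin> \<rho>} \<le> card {\<rho> \<in> c. \<rho> \<subset> \<sigma>}"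
    show "x \<in> \<sigma>"
    proof (rule ccontr)
      assume "x \<notin> \<sigma>"
      then have "insert \<sigma> {\<rho> \<in> c. \<rho> \<subset> \<sigma>} \<subseteq> {\<rho> \<in> c. x \<notin> \<rho>}"
        using \<sigma> by auto
      then have "card (insert \<sigma> {\<rho> \<in> c. \<rho> \<subset> \<sigma>}) \<le> card {\<rho> \<in> c. x \<notin> \<rho>}"
        using fin by (intro card_mono) auto
      then show False
        using le fin by simp
    qed
  qed
  then show ?thesis
    using sub \<sigma> unfolding sublevel_def by auto
qed

lemma top_chain_eq_sublevel_chain:
  assumes c: "c \<in> top_chains \<tau> m"
  defines "g \<equiv> restrict (\<lambda>x. card {\<rho> \<in> c. x \<notin> \<rho>}) \<tau>"
  shows "g \<in> surjections \<tau> {..m}" and "c = sublevel \<tau> g ` {..m}"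
proof -
  from c have fin: "finite c" and sub: "c \<subseteq> Pow \<tau> - {{}}" and top: "\<tau> \<in> c"
    and card_c: "card c = Suc m"
    unfolding top_chains_def chains_def by (auto intro: card_ge_0_finite)
  have sublevel_g: "sublevel \<tau> g = sublevel \<tau> (\<lambda>x. card {\<rho> \<in> c. x \<notin> \<rho>})"
    unfolding g_def sublevel_def by auto
  have card_le_m: "card (c - {\<sigma>}) \<le> m" if "\<sigma> \<in> c" for \<sigma>
    using that fin card_c by (simp add: card_Diff_singleton)
  have g: "g \<in> \<tau> \<rightarrow>\<^sub>E {..m}"
  proof -
    have "card {\<rho> \<in> c. x \<notin> \<rho>} \<le> card (c - {\<tau>})" if "x \<in> \<tau>" for x
      using that fin by (intro card_mono) auto
    then show ?thesis
      using card_le_m[OF top] unfolding g_def by (auto intro: order_trans)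
  qed
  have c_sub: "c \<subseteq> sublevel \<tau> g ` {..m}"
  proof
    fix \<sigma> assume "\<sigma> \<in> c"
    have "card {\<rho> \<in> c. \<rho> \<subset> \<sigma>} \<le> card (c - {\<sigma>})"
      using fin by (intro card_mono) auto
    then have "card {\<rho> \<in> c. \<rho> \<subset> \<sigma>} \<in> {..m}"
      using card_le_m[OF \<open>\<sigma> \<in> c\<close>] by simp
    then show "\<sigma> \<in> sublevel \<tau> g ` {..m}"
      unfolding sublevel_g
      by (rule rev_image_eqI) (rule top_chain_member_eq_sublevel[OF c \<open>\<sigma> \<in> c\<close>, symmetric])
  qed
  moreover have "card (sublevel \<tau> g ` {..m}) \<le> card c"
    using card_image_le[of "{..m}" "sublevel \<tau> g"] card_c by simp
  moreover have "card c \<le> card (sublevel \<tau> g ` {..m})"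
    using c_sub by (intro card_mono) auto
  ultimately show eq: "c = sublevel \<tau> g ` {..m}"
    by (intro card_subset_eq) auto
  have "inj_on (sublevel \<tau> g) {..m}"
    using card_c eq by (intro eq_card_imp_inj_on) auto
  moreover have "sublevel \<tau> g 0 \<noteq> {}"
    using eq sub by auto
  ultimately show "g \<in> surjections \<tau> {..m}"
    by (rule surjections_if_inj_on_sublevel[OF g])
qed

lemma card_top_chains:
  assumes "finite \<tau>"
  shows "card (top_chains \<tau> m) = fact (Suc m) * Stirling (card \<tau>) (Suc m)"
proof -
  have "bij_betw (\<lambda>f. sublevel \<tau> f ` {..m}) (surjections \<tau> {..m}) (top_chains \<tau> m)"
    unfolding bij_betw_def
  proof (intro conjI inj_on_sublevel_chain equalityI subsetI)
    fix c assume "c \<in> top_chains \<tau> m"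
    then show "c \<in> (\<lambda>f. sublevel \<tau> f ` {..m}) ` surjections \<tau> {..m}"
      using top_chain_eq_sublevel_chain by blast
  qed (auto intro: sublevel_chain_in_top_chains)
  then have "card (top_chains \<tau> m) = card (surjections \<tau> {..m})"
    by (simp add: bij_betw_same_card)
  then show ?thesis
    using card_surjections[OF assms, of "{..m}"] by simp
qed

section \<open>The face numbers of the barycentric subdivision\<close>

definition dim_le :: "'a set set \<Rightarrow> nat \<Rightarrow> bool" where
  "dim_le K d \<longleftrightarrow> (\<forall>\<sigma>\<in>K. finite \<sigma> \<and> card \<sigma> \<le> Suc d)"

lemma mem_bsd_iff: "c \<in> bsd K \<longleftrightarrow> c = {} \<or> finite c \<and> c \<in> chains (K - {{}})"
  unfolding bsd_def chains_def chain_subset_def by auto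

lemma finite_bsd: "finite K \<Longrightarrow> finite (bsd K)"
  by (rule finite_subset[of _ "Pow K"]) (auto simp: mem_bsd_iff chains_def)

lemma simplicial_complex_bsd: "simplicial_complex (bsd K)"
  unfolding simplicial_complex_def
proof (intro conjI ballI allI impI)
  fix c c' assume "c \<in> bsd K" "c' \<subseteq> c"
  then show "c' \<in> bsd K"
    unfolding mem_bsd_iff chains_def chain_subset_def by (blast intro: finite_subset)
qed (simp add: mem_bsd_iff)

lemma card_chain_le:
  assumes "chain\<^sub>\<subseteq> c" and "\<And>\<sigma>. \<sigma> \<in> c \<Longrightarrow> finite \<sigma> \<and> \<sigma> \<noteq> {} \<and> card \<sigma> \<le> n"
  shows "card c \<le> n"
proof -
  have "inj_on card c"
  proof (rule inj_onI)
    fix \<sigma> \<rho> assume "\<sigma> \<in> c" "\<rho> \<in> c" "card \<sigma> = card \<rho>"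
    then show "\<sigma> = \<rho>"
      using assms card_subset_eq unfolding chain_subset_def by metis
  qed
  moreover have "card ` c \<subseteq> {1..n}"
    using assms(2) by (auto simp: Suc_le_eq card_gt_0_iff)
  ultimately show ?thesis
    using card_inj_on_le[of card c "{1..n}"] by simp
qed

lemma dim_le_bsd:
  assumes "dim_le K d"
  shows "dim_le (bsd K) d"
  unfolding dim_le_def
proof
  fix c assume "c \<in> bsd K"
  then have "c = {} \<or> finite c \<and> c \<subseteq> K - {{}} \<and> chain\<^sub>\<subseteq> c"
    unfolding mem_bsd_iff chains_def by blast
  moreover have "card c \<le> Suc d" if "c \<subseteq> K - {{}}" "chain\<^sub>\<subseteq> c"
    using that assms unfolding dim_le_def by (intro card_chain_le) auto
  ultimately show "finite c \<and> card c \<le> Suc d"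
    by auto
qed

lemma Union_top_chain: "c \<in> top_chains \<tau> m \<Longrightarrow> \<Union>c = \<tau>"
  unfolding top_chains_def chains_def by blast

lemma bsd_faces_eq_UN_top_chains:
  assumes "simplicial_complex K"
  shows "{c \<in> bsd K. card c = i + 1} = (\<Union>\<tau>\<in>K - {{}}. top_chains \<tau> i)"
proof (intro equalityI subsetI)
  fix c assume "c \<in> {c \<in> bsd K. card c = i + 1}"
  then have c: "finite c" "c \<noteq> {}" "c \<subseteq> K - {{}}" "chain\<^sub>\<subseteq> c" "card c = Suc i"
    unfolding mem_bsd_iff chains_def by auto
  then have "\<Union>c \<in> c"
    by (intro Union_in_chain) (auto simp: chain_subset_alt_def)
  then have "c \<in> top_chains (\<Union>c) i"
    using c unfolding top_chains_def chains_def by auto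
  with \<open>\<Union>c \<in> c\<close> c(3) show "c \<in> (\<Union>\<tau>\<in>K - {{}}. top_chains \<tau> i)"
    by blast
next
  fix c assume "c \<in> (\<Union>\<tau>\<in>K - {{}}. top_chains \<tau> i)"
  then obtain \<tau> where "\<tau> \<in> K" and c: "c \<in> top_chains \<tau> i" by blast
  then have "Pow \<tau> \<subseteq> K"
    using assms unfolding simplicial_complex_def by blast
  then show "c \<in> {c \<in> bsd K. card c = i + 1}"
    using c unfolding top_chains_def chains_def mem_bsd_iff by (auto intro: card_ge_0_finite)
qed

lemma sum_over_simplices_by_card:
  fixes h :: "nat \<Rightarrow> 'b::comm_semiring_1"
  assumes "finite K" and "dim_le K d"
  shows "(\<Sum>\<sigma>\<in>K - {{}}. h (card \<sigma>)) = (\<Sum>j\<le>d. of_nat (fnum K j) * h (Suc j))"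
proof -
  have "(\<Sum>\<sigma>\<in>K - {{}}. h (card \<sigma>)) = (\<Sum>j\<le>d. \<Sum>\<sigma>\<in>{\<sigma> \<in> K - {{}}. card \<sigma> - 1 = j}. h (card \<sigma>))"
    using assms unfolding dim_le_def by (intro sum.group[symmetric]) auto
  also have "\<dots> = (\<Sum>j\<le>d. \<Sum>\<sigma>\<in>{\<sigma> \<in> K. card \<sigma> = Suc j}. h (Suc j))"
  proof (rule sum.cong[OF refl])
    fix j
    have "{\<sigma> \<in> K - {{}}. card \<sigma> - 1 = j} = {\<sigma> \<in> K. card \<sigma> = Suc j}"
    proof (intro set_eqI)
      fix \<sigma>
      show "\<sigma> \<in> {\<sigma> \<in> K - {{}}. card \<sigma> - 1 = j} \<longleftrightarrow> \<sigma> \<in> {\<sigma> \<in> K. card \<sigma> = Suc j}"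
        using assms unfolding dim_le_def by (cases "card \<sigma>") auto
    qed
    then show "(\<Sum>\<sigma>\<in>{\<sigma> \<in> K - {{}}. card \<sigma> - 1 = j}. h (card \<sigma>))
        = (\<Sum>\<sigma>\<in>{\<sigma> \<in> K. card \<sigma> = Suc j}. h (Suc j))"
      by (intro sum.cong) auto
  qed
  finally show ?thesis
    by (simp add: fnum_def)
qed

lemma fsmall_of_nat: "fsmall (int i) (int j) = fact (Suc i) * of_nat (Stirling (Suc j) (Suc i))"
  unfolding fsmall_def by simp

lemma fnum_bsd:
  assumes "finite K" and "simplicial_complex K" and "dim_le K d"
  shows "of_nat (fnum (bsd K) i) = (\<Sum>j\<le>d. fsmall (int i) (int j) * of_nat (fnum K j))"
proof -
  have "fnum (bsd K) i = card (\<Union>\<tau>\<in>K - {{}}. top_chains \<tau> i)"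
    unfolding fnum_def bsd_faces_eq_UN_top_chains[OF assms(2)] ..
  also have "\<dots> = (\<Sum>\<tau>\<in>K - {{}}. card (top_chains \<tau> i))"
  proof (rule card_UN_disjoint)
    show "\<forall>\<tau>\<in>K - {{}}. finite (top_chains \<tau> i)"
      using assms(3) unfolding dim_le_def top_chains_def chains_def
      by (auto intro: finite_subset[of _ "Pow (Pow _)"])
    show "\<forall>\<tau>\<in>K - {{}}. \<forall>\<tau>'\<in>K - {{}}. \<tau> \<noteq> \<tau>' \<longrightarrow> top_chains \<tau> i \<inter> top_chains \<tau>' i = {}"
      using Union_top_chain by blast
  qed (use assms(1) in simp)
  also have "\<dots> = (\<Sum>\<tau>\<in>K - {{}}. fact (Suc i) * Stirling (card \<tau>) (Suc i))"
    using assms(3) unfolding dim_le_def by (intro sum.cong) (auto simp: card_top_chains)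
  finally have "(of_nat (fnum (bsd K) i) :: rat)
      = (\<Sum>\<tau>\<in>K - {{}}. fact (Suc i) * of_nat (Stirling (card \<tau>) (Suc i)))"
    by (simp del: fact_Suc)
  also have "\<dots> = (\<Sum>j\<le>d. of_nat (fnum K j) * (fact (Suc i) * of_nat (Stirling (Suc j) (Suc i))))"
    by (rule sum_over_simplices_by_card[OF assms(1,3)])
  finally show ?thesis
    by (simp add: fsmall_of_nat mult_ac del: fact_Suc)
qed

section \<open>Relabelling vertices and iterated subdivisions\<close>

lemma simplicial_complex_image:
  assumes "simplicial_complex K"
  shows "simplicial_complex (image h ` K)"
  unfolding simplicial_complex_def
proof (intro conjI ballI allI impI)
  show "{} \<in> image h ` K"
    using assms unfolding simplicial_complex_def by force
next
  fix s \<tau> assume "s \<in> image h ` K" "\<tau> \<subseteq> s"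
  then obtain \<sigma> where "\<sigma> \<in> K" "\<tau> = h ` (\<sigma> \<inter> h -` \<tau>)" by blast
  moreover have "\<sigma> \<inter> h -` \<tau> \<in> K"
    using assms \<open>\<sigma> \<in> K\<close> unfolding simplicial_complex_def by blast
  ultimately show "\<tau> \<in> image h ` K" by blast
qed

lemma card_image_simplex: "inj_on h (\<Union>K) \<Longrightarrow> \<sigma> \<in> K \<Longrightarrow> card (h ` \<sigma>) = card \<sigma>"
  by (meson Union_upper card_image inj_on_subset)

lemma dim_le_image:
  assumes "inj_on h (\<Union>K)" and "dim_le K d"
  shows "dim_le (image h ` K) d"
  using assms card_image_simplex[OF assms(1)] unfolding dim_le_def by auto

lemma fnum_image:
  assumes "inj_on h (\<Union>K)"
  shows "fnum (image h ` K) i = fnum K i"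
proof -
  have "{s \<in> image h ` K. card s = i + 1} = image h ` {\<sigma> \<in> K. card \<sigma> = i + 1}"
    using card_image_simplex[OF assms] by auto
  moreover have "inj_on (image h) K"
    by (rule inj_on_subset[OF inj_on_image_Pow[OF assms]]) auto
  ultimately show ?thesis
    unfolding fnum_def by (simp add: card_image inj_on_subset)
qed

lemma inj_on_vert: "inj_on vert {\<sigma>. finite \<sigma>}"
  unfolding vert_def by (rule inj_onI) (simp add: Abs_fset_inject)

lemma inj_on_vert_Union_bsd:
  assumes "dim_le K d"
  shows "inj_on vert (\<Union>(bsd K))"
proof (rule inj_on_subset[OF inj_on_vert])
  have "\<Union>(bsd K) \<subseteq> K"
    by (auto simp: mem_bsd_iff chains_def)
  then show "\<Union>(bsd K) \<subseteq> {\<sigma>. finite \<sigma>}"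
    using assms unfolding dim_le_def by auto
qed

lemma bsd_iter_invariants:
  assumes "finite \<Delta>" and "simplicial_complex \<Delta>" and "dim_le \<Delta> d"
  shows "finite (bsd_iter k \<Delta>) \<and> simplicial_complex (bsd_iter k \<Delta>) \<and> dim_le (bsd_iter k \<Delta>) d"
proof (induction k)
  case 0
  have "inj_on V (\<Union>\<Delta>)" by (simp add: inj_on_def)
  then show ?case
    using assms by (simp add: simplicial_complex_image dim_le_image)
next
  case (Suc k)
  then show ?case
    using inj_on_vert_Union_bsd[of "bsd_iter k \<Delta>" d]
    by (simp add: finite_bsd simplicial_complex_bsd dim_le_bsd
                  simplicial_complex_image dim_le_image)
qed

lemma fnum_bsd_iter_0: "fnum (bsd_iter 0 \<Delta>) i = fnum \<Delta> i"
  by (simp add: fnum_image inj_on_def)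

lemma fnum_bsd_iter_Suc:
  assumes "dim_le (bsd_iter k \<Delta>) d"
  shows "fnum (bsd_iter (Suc k) \<Delta>) i = fnum (bsd (bsd_iter k \<Delta>)) i"
  using fnum_image[OF inj_on_vert_Union_bsd[OF assms]] by simp

section \<open>Solving the triangular recurrence\<close>

declare Fbig.simps [simp del]

lemma Fbig_diag: "Fbig (int d) (int d) = 1"
  by (subst Fbig.simps) simp

lemma Fbig_below_diag:
  assumes "i < d"
  shows "Fbig (int i) (int d) = 1 / (fact (Suc d) - fact (Suc i)) *
           (\<Sum>j\<in>{Suc i..d}. fsmall (int i) (int j) * Fbig (int j) (int d))"
proof -
  have "{int i + 1..int d} = int ` {Suc i..d}"
    by (simp add: image_int_atLeastAtMost)
  moreover have "nat (int n + 1) = Suc n" for n by simp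
  ultimately show ?thesis
    using assms by (subst Fbig.simps) (simp add: sum.reindex del: fact_Suc)
qed

lemma sum_fsmall_split_diag:
  assumes "i \<le> d"
  shows "(\<Sum>j\<le>d. fsmall (int i) (int j) * x j)
           = fact (Suc i) * x i + (\<Sum>j\<in>{Suc i..d}. fsmall (int i) (int j) * x j)"
proof -
  have "(\<Sum>j\<le>d. fsmall (int i) (int j) * x j) = (\<Sum>j\<in>{i..d}. fsmall (int i) (int j) * x j)"
    by (rule sum.mono_neutral_right) (auto simp: fsmall_of_nat)
  also have "\<dots> = fsmall (int i) (int i) * x i + (\<Sum>j\<in>{Suc i..d}. fsmall (int i) (int j) * x j)"
    using assms by (rule sum.atLeast_Suc_atMost)
  finally show ?thesis
    by (simp add: fsmall_of_nat del: fact_Suc)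
qed

lemma geometric_forcing_closed_form:
  fixes x :: "nat \<Rightarrow> 'a::field"
  assumes rec: "\<And>k. x (Suc k) = a * x k + (\<Sum>l\<in>L. D l * r l ^ k)"
    and distinct: "\<And>l. l \<in> L \<Longrightarrow> r l \<noteq> a"
  shows "x k = (\<Sum>l\<in>L. D l / (r l - a) * r l ^ k) + (x 0 - (\<Sum>l\<in>L. D l / (r l - a))) * a ^ k"
proof (induction k)
  case (Suc k)
  have "a * (D l / (r l - a)) + D l = D l / (r l - a) * r l" if "l \<in> L" for l
    using distinct[OF that] by (simp add: field_simps)
  then have "(\<Sum>l\<in>L. (a * (D l / (r l - a)) + D l) * r l ^ k)
      = (\<Sum>l\<in>L. D l / (r l - a) * r l ^ Suc k)"
    by (intro sum.cong) auto
  then show ?case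
    unfolding rec Suc by (simp add: algebra_simps sum_distrib_left sum.distrib)
qed simp

lemma fvector_recurrence_row:
  fixes f :: "nat \<Rightarrow> nat \<Rightarrow> rat"
  assumes rec: "\<And>k i. f (Suc k) i = (\<Sum>j\<le>d. fsmall (int i) (int j) * f k j)" and "i \<le> d"
    and lower: "\<And>j k. j \<in> {Suc i..d} \<Longrightarrow> f k j = (\<Sum>l\<le>d - j. C j l * fact (d + 1 - l) ^ k)"
  shows "f (Suc k) i = fact (Suc i) * f k i +
           (\<Sum>l<d - i. (\<Sum>j\<in>{j \<in> {Suc i..d}. l \<le> d - j}. fsmall (int i) (int j) * C j l)
                        * fact (d + 1 - l) ^ k)"
proof -
  have "(\<Sum>j\<in>{Suc i..d}. fsmall (int i) (int j) * f k j)
      = (\<Sum>j\<in>{Suc i..d}. \<Sum>l\<in>{l \<in> {..<d - i}. l \<le> d - j}.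
           fsmall (int i) (int j) * C j l * fact (d + 1 - l) ^ k)"
  proof (rule sum.cong[OF refl])
    fix j assume j: "j \<in> {Suc i..d}"
    then have "{l \<in> {..<d - i}. l \<le> d - j} = {..d - j}"
      by auto
    then show "fsmall (int i) (int j) * f k j
        = (\<Sum>l\<in>{l \<in> {..<d - i}. l \<le> d - j}. fsmall (int i) (int j) * C j l * fact (d + 1 - l) ^ k)"
      unfolding lower[OF j] by (simp add: sum_distrib_left mult.assoc)
  qed
  also have "\<dots> = (\<Sum>l<d - i. (\<Sum>j\<in>{j \<in> {Suc i..d}. l \<le> d - j}. fsmall (int i) (int j) * C j l)
                                * fact (d + 1 - l) ^ k)"
    by (subst sum.swap_restrict) (simp_all add: sum_distrib_right)
  finally show ?thesis
    using rec sum_fsmall_split_diag[OF \<open>i \<le> d\<close>] by simp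
qed

lemma fvector_recurrence_closed_form:
  fixes f :: "nat \<Rightarrow> nat \<Rightarrow> rat"
  assumes rec: "\<And>k i. f (Suc k) i = (\<Sum>j\<le>d. fsmall (int i) (int j) * f k j)" and "i \<le> d"
  shows "\<exists>C. (\<forall>k. f k i = (\<Sum>l\<le>d - i. C l * fact (d + 1 - l) ^ k))
             \<and> C 0 = f 0 d * Fbig (int i) (int d)"
  using \<open>i \<le> d\<close>
proof (induction "d - i" arbitrary: i rule: less_induct)
  case less
  have "\<forall>j\<in>{Suc i..d}. \<exists>C. (\<forall>k. f k j = (\<Sum>l\<le>d - j. C l * fact (d + 1 - l) ^ k))
          \<and> C 0 = f 0 d * Fbig (int j) (int d)"
    using less.prems by (intro ballI less.hyps) auto
  from bchoice[OF this] obtain CC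
    where "\<forall>j\<in>{Suc i..d}. (\<forall>k. f k j = (\<Sum>l\<le>d - j. CC j l * fact (d + 1 - l) ^ k))
          \<and> CC j 0 = f 0 d * Fbig (int j) (int d)"
    by blast
  then have CC: "\<And>j k. j \<in> {Suc i..d} \<Longrightarrow> f k j = (\<Sum>l\<le>d - j. CC j l * fact (d + 1 - l) ^ k)"
    and CC0: "\<And>j. j \<in> {Suc i..d} \<Longrightarrow> CC j 0 = f 0 d * Fbig (int j) (int d)"
    by blast+
  define D where "D l = (\<Sum>j\<in>{j \<in> {Suc i..d}. l \<le> d - j}. fsmall (int i) (int j) * CC j l)" for l
  define E where "E l = D l / (fact (d + 1 - l) - fact (Suc i))" for l
  define C where "C l = (if l < d - i then E l else f 0 i - (\<Sum>l<d - i. E l))" for l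
  have distinct: "fact (d + 1 - l) \<noteq> (fact (Suc i) :: rat)" if "l \<in> {..<d - i}" for l
  proof -
    have "(fact (Suc i) :: rat) < fact (d + 1 - l)"
      using that by (intro fact_less_mono) auto
    then show ?thesis by simp
  qed
  have "f k i = (\<Sum>l\<le>d - i. C l * fact (d + 1 - l) ^ k)" for k
  proof -
    have "f k i = (\<Sum>l<d - i. E l * fact (d + 1 - l) ^ k)
                  + (f 0 i - (\<Sum>l<d - i. E l)) * fact (Suc i) ^ k"
      unfolding E_def D_def
      by (rule geometric_forcing_closed_form
                 [OF fvector_recurrence_row[OF rec less.prems CC] distinct])
    moreover have "d + 1 - (d - i) = Suc i"
      using less.prems by simp
    ultimately show ?thesis
      unfolding lessThan_Suc_atMost[symmetric] by (simp add: C_def del: fact_Suc)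
  qed
  moreover have "C 0 = f 0 d * Fbig (int i) (int d)"
  proof (cases "i = d")
    case True
    then show ?thesis by (simp add: C_def Fbig_diag)
  next
    case False
    have "D 0 = f 0 d * (\<Sum>j\<in>{Suc i..d}. fsmall (int i) (int j) * Fbig (int j) (int d))"
      unfolding D_def sum_distrib_left by (intro sum.cong) (auto simp: CC0)
    then show ?thesis
      using False less.prems by (simp add: C_def E_def Fbig_below_diag del: fact_Suc)
  qed
  ultimately show ?case by blast
qed

lemma fnum_bsd_iter_recurrence:
  assumes "finite \<Delta>" and "simplicial_complex \<Delta>" and "dim_le \<Delta> d"
  shows "of_nat (fnum (bsd_iter (Suc k) \<Delta>) i)
           = (\<Sum>j\<le>d. fsmall (int i) (int j) * of_nat (fnum (bsd_iter k \<Delta>) j))"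
proof -
  note invariants = bsd_iter_invariants[OF assms, of k]
  then show ?thesis
    unfolding fnum_bsd_iter_Suc[OF invariants[THEN conjunct2, THEN conjunct2]]
    by (intro fnum_bsd) auto
qed

lemma fnum_bsd_iter_closed_form:
  assumes "finite \<Delta>" and "simplicial_complex \<Delta>" and "dim_le \<Delta> d" and "i \<le> d"
  shows "\<exists>C. (\<forall>k. of_nat (fnum (bsd_iter k \<Delta>) i) = (\<Sum>l\<le>d - i. C l * fact (d + 1 - l) ^ k))
             \<and> C 0 = of_nat (fnum \<Delta> d) * Fbig (int i) (int d)"
  using fvector_recurrence_closed_form[where f = "\<lambda>k j. of_nat (fnum (bsd_iter k \<Delta>) j)",
                                      OF fnum_bsd_iter_recurrence[OF assms(1-3)] assms(4)]
  by (simp only: fnum_bsd_iter_0)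

section \<open>Asymptotics\<close>

lemma of_rat_fact [simp]: "of_rat (fact n) = fact n"
  by (metis of_nat_fact of_rat_of_nat_eq)

lemma sum_powers_bigo:
  fixes c r :: "nat \<Rightarrow> real"
  assumes "\<And>l. l \<in> A \<Longrightarrow> \<bar>r l\<bar> \<le> s"
  shows "(\<lambda>k. \<Sum>l\<in>A. c l * r l ^ k) \<in> O(\<lambda>k. s ^ k)"
proof (rule big_sum_in_bigo)
  fix l assume "l \<in> A"
  have "norm (c l * r l ^ k) \<le> \<bar>c l\<bar> * norm (s ^ k)" for k
  proof -
    have "\<bar>r l\<bar> ^ k \<le> s ^ k"
      using assms[OF \<open>l \<in> A\<close>] by (intro power_mono) auto
    moreover have "0 \<le> s"
      using assms[OF \<open>l \<in> A\<close>] by linarith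
    ultimately show ?thesis
      by (simp add: abs_mult power_abs mult_left_mono)
  qed
  then show "(\<lambda>k. c l * r l ^ k) \<in> O(\<lambda>k. s ^ k)"
    by (intro bigoI[of _ "\<bar>c l\<bar>"]) (simp add: always_eventually)
qed

lemma fact_powers_leading_term_bigo:
  fixes c :: "nat \<Rightarrow> real"
  shows "(\<lambda>k. (\<Sum>l\<le>n. c l * fact (d + 1 - l) ^ k) - c 0 * fact (d + 1) ^ k) \<in> O(\<lambda>k. fact d ^ k)"
proof -
  have "(\<Sum>l\<le>n. c l * fact (d + 1 - l) ^ k) - c 0 * fact (d + 1) ^ k
        = (\<Sum>l\<in>{1..n}. c l * fact (d + 1 - l) ^ k)" for k
    by (simp add: atMost_atLeast0 sum.atLeast_Suc_atMost del: fact_Suc)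
  moreover have "(\<lambda>k. \<Sum>l\<in>{1..n}. c l * fact (d + 1 - l) ^ k) \<in> O(\<lambda>k. fact d ^ k)"
    by (rule sum_powers_bigo) (auto intro: fact_mono)
  ultimately show ?thesis by simp
qed

theorem lemma2p8:
  fixes \<Delta> :: "'a set set" and d i :: nat
  assumes "finite \<Delta>" and "simplicial_complex \<Delta>" and "has_dim \<Delta> d" and "i \<le> d"
  shows "(\<exists>C :: nat \<Rightarrow> rat.
           (\<forall>k. of_nat (fnum (bsd_iter k \<Delta>) i) = (\<Sum>j\<le>d - i. C j * (fact (d + 1 - j)) ^ k))
         \<and> C 0 = of_nat (fnum \<Delta> d) * Fbig (int i) (int d))
         \<and> (\<lambda>k. real (fnum (bsd_iter k \<Delta>) i)
              - real (fnum \<Delta> d) * real_of_rat (Fbig (int i) (int d)) * (fact (d + 1)) ^ k)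
           \<in> O(\<lambda>k. (fact d) ^ k)"
proof -
  have "dim_le \<Delta> d"
    using assms(3) unfolding has_dim_def dim_le_def by auto
  then obtain C
    where C: "\<And>k. of_nat (fnum (bsd_iter k \<Delta>) i) = (\<Sum>l\<le>d - i. C l * fact (d + 1 - l) ^ k)"
      and C0: "C 0 = of_nat (fnum \<Delta> d) * Fbig (int i) (int d)"
    using fnum_bsd_iter_closed_form[OF assms(1,2) _ assms(4)] by blast
  have "real (fnum (bsd_iter k \<Delta>) i) = (\<Sum>l\<le>d - i. real_of_rat (C l) * fact (d + 1 - l) ^ k)" for k
    using arg_cong[OF C[of k], of real_of_rat]
    by (simp add: of_rat_sum of_rat_mult of_rat_power del: fact_Suc)
  moreover have "real (fnum \<Delta> d) * real_of_rat (Fbig (int i) (int d)) = real_of_rat (C 0)"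
    by (simp add: C0 of_rat_mult)
  ultimately show ?thesis
    using C C0 fact_powers_leading_term_bigo[where c = "\<lambda>l. real_of_rat (C l)" and n = "d - i"]
    by auto
qed

end
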